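(* Let $f$ satisfy Hypothesis 1 or Hypothesis 2 (see context), let $\eta\in(0,1]$, $\theta\in(1-\alpha,+\infty)$, and let $(\rho_1,\rho_2)$ be a classical solution of the viscous system (see context) with $\rho_{1,0},\rho_{2,0}\in\mathscr{P}(\Omega)$ and $\sigma_0^{-\theta}\in L^1(\Omega)$, where $\sigma_0=\rho_{1,0}+\rho_{2,0}$ and $\sigma=\rho_1+\rho_2$. Then there exists $\mathcal{K}_{2,\theta}>0$, depending only on $\alpha,\kappa,\theta,|\Omega|,T$, $\|\sigma_0^{-\theta}\|_{L^1(\Omega)}$ and the Lipschitz constants of $V_1,V_2$ (in particular independent of $\eta$), such that \[ \|\sigma^{-\theta}\|_{L^\infty([0,T];L^1(\Omega))}+\big\|\partial_x\sigma^{\frac{\alpha-1-\theta}{2}}\big\|_{L^2([0,T]\times\Omega)}<\mathcal{K}_{2,\theta}. \]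
   Context: $\Omega=(0,L)$, $T>0$. Hypothesis 1: (H1) $f(s)=\frac{\lambda}{\alpha-1}s^\alpha$ with $\alpha\in(0,1)$, $\lambda>0$; or (H2) $f(s)=\lambda s\log s$, $\lambda>0$. Hypothesis 2: (I1) $f\in C^{4,\beta}_{loc}(0,\infty)$ for some $\beta\in(0,1]$, $f''>0$; (I2) $\frac{1}{\alpha\kappa}s^\alpha\le s^2f''(s)$ for $s>0$, with $\alpha\in(0,1)$, $\kappa>0$; (I3) $|sf'''(s)/f''(s)|\le\kappa$; (I4) $\int_\Omega f(\mu)\,dx>-\mathcal{K}_{\inf}$ for all $\mu\in\mathscr{P}^{ac}(\Omega)$. When $f$ is as in Hypothesis 1, $\alpha,\kappa$ denote the corresponding constants determined by $f$. Viscous system, for $\eta\in(0,1]$, $i\in\{1,2\}$: $\partial_t\rho_i=\eta\partial_{xx}\rho_i+\partial_x(\rho_i\partial_x(f'(\rho_1+\rho_2)+V_i))$ in $(0,T)\times\Omega$, $\rho_i(0)=\rho_{i,0}$, $\eta\partial_x\rho_i+\rho_i\partial_x(f'(\rho_1+\rho_2)+V_i)=0$ on $(0,T)\times\partial\Omega$. Standing assumptions: $V_1,V_2\in C^{3,1}(\overline\Omega)$ with $\partial_xV_1=\partial_xV_2=0$ on $\partial\Omega$; $\rho_{i,0}\in C^{3,1}(\overline\Omega)$ probability densities with $\rho_{1,0}+\rho_{2,0}>0$ on $\overline\Omega$ satisfying the zeroth- and first-order boundary compatibility conditions; $f\in C^{4,\beta}_{loc}(0,\infty)$, $f''\ge0$.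 A classical solution is a pair $\rho_1,\rho_2\in C([0,T];C^3(\overline\Omega))\cap C^1([0,T];C^1(\overline\Omega))$ satisfying the system pointwise, with $\rho_1+\rho_2>0$. *)

theory Defs
  imports "HOL-Analysis.Analysis"
begin

definition dX :: "real \<Rightarrow> (real \<Rightarrow> real) \<Rightarrow> real \<Rightarrow> real" where
  "dX L g = (\<lambda>x. vector_derivative g (at x within {0..L}))"

definition Dx :: "real \<Rightarrow> (real \<Rightarrow> real \<Rightarrow> real) \<Rightarrow> real \<Rightarrow> real \<Rightarrow> real" where
  "Dx L u = (\<lambda>t x. vector_derivative (u t) (at x within {0..L}))"

definition Dt :: "real \<Rightarrow> (real \<Rightarrow> real \<Rightarrow> real) \<Rightarrow> real \<Rightarrow> real \<Rightarrow> real" where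
  "Dt T u = (\<lambda>t x. vector_derivative (\<lambda>s. u s x) (at t within {0..T}))"

definition C_on :: "nat \<Rightarrow> real \<Rightarrow> (real \<Rightarrow> real) \<Rightarrow> bool" where
  "C_on n L g \<longleftrightarrow>
     (\<forall>k<n. \<forall>x\<in>{0..L}. ((dX L ^^ k) g) differentiable (at x within {0..L})) \<and>
     continuous_on {0..L} ((dX L ^^ n) g)"

definition C31_on :: "real \<Rightarrow> (real \<Rightarrow> real) \<Rightarrow> bool" where
  "C31_on L g \<longleftrightarrow> C_on 3 L g \<and> (\<exists>C. lipschitz_on C {0..L} ((dX L ^^ 3) g))"

definition prob_density :: "real \<Rightarrow> (real \<Rightarrow> real) \<Rightarrow> bool" where
  "prob_density L g \<longleftrightarrow> (\<forall>x\<in>{0..L}. 0 \<le> g x) \<and> g integrable_on {0..L}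
      \<and> integral {0..L} g = 1"

definition C4beta_loc :: "(real \<Rightarrow> real) \<Rightarrow> real \<Rightarrow> bool" where
  "C4beta_loc f \<beta> \<longleftrightarrow>
     (\<forall>k<4. \<forall>s>0. ((deriv ^^ k) f) differentiable (at s)) \<and>
     continuous_on {0<..} ((deriv ^^ 4) f) \<and>
     (\<forall>a b. 0 < a \<longrightarrow> a \<le> b \<longrightarrow> (\<exists>C. \<forall>x\<in>{a..b}. \<forall>y\<in>{a..b}.
         \<bar>(deriv ^^ 4) f x - (deriv ^^ 4) f y\<bar> \<le> C * \<bar>x - y\<bar> powr \<beta>))"

definition H1 :: "real \<Rightarrow> (real \<Rightarrow> real) \<Rightarrow> bool" where
  "H1 \<alpha> f \<longleftrightarrow> 0 < \<alpha> \<and> \<alpha> < 1 \<and>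
     (\<exists>lam>0. \<forall>s>0. f s = lam / (\<alpha> - 1) * s powr \<alpha>)"

definition H2 :: "(real \<Rightarrow> real) \<Rightarrow> bool" where
  "H2 f \<longleftrightarrow> (\<exists>lam>0. \<forall>s>0. f s = lam * s * ln s)"

definition I2 :: "real \<Rightarrow> real \<Rightarrow> (real \<Rightarrow> real) \<Rightarrow> bool" where
  "I2 \<alpha> \<kappa> f \<longleftrightarrow> (\<forall>s>0. 1 / (\<alpha> * \<kappa>) * s powr \<alpha> \<le> s\<^sup>2 * (deriv ^^ 2) f s)"

definition I3 :: "real \<Rightarrow> (real \<Rightarrow> real) \<Rightarrow> bool" where
  "I3 \<kappa> f \<longleftrightarrow> (\<forall>s>0. \<bar>s * (deriv ^^ 3) f s / (deriv ^^ 2) f s\<bar> \<le> \<kappa>)"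

definition I4 :: "real \<Rightarrow> (real \<Rightarrow> real) \<Rightarrow> bool" where
  "I4 L f \<longleftrightarrow> (\<exists>Kinf. \<forall>\<mu>. prob_density L \<mu> \<longrightarrow> (\<lambda>x. f (\<mu> x)) integrable_on {0..L}
       \<longrightarrow> integral {0..L} (\<lambda>x. f (\<mu> x)) > - Kinf)"

definition Hyp2 :: "real \<Rightarrow> real \<Rightarrow> real \<Rightarrow> (real \<Rightarrow> real) \<Rightarrow> bool" where
  "Hyp2 L \<alpha> \<kappa> f \<longleftrightarrow> (\<exists>\<beta>. 0 < \<beta> \<and> \<beta> \<le> 1 \<and> C4beta_loc f \<beta>) \<and>
     (\<forall>s>0. (deriv ^^ 2) f s > 0) \<and> 0 < \<alpha> \<and> \<alpha> < 1 \<and> 0 < \<kappa> \<and>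
     I2 \<alpha> \<kappa> f \<and> I3 \<kappa> f \<and> I4 L f"

definition f_hyp :: "real \<Rightarrow> real \<Rightarrow> real \<Rightarrow> (real \<Rightarrow> real) \<Rightarrow> bool" where
  "f_hyp L \<alpha> \<kappa> f \<longleftrightarrow>
     ((H1 \<alpha> f \<or> (H2 f \<and> \<alpha> = 1)) \<and> 0 < \<kappa> \<and> I2 \<alpha> \<kappa> f \<and> I3 \<kappa> f) \<or> Hyp2 L \<alpha> \<kappa> f"

definition pressure :: "(real \<Rightarrow> real) \<Rightarrow> (real \<Rightarrow> real) \<Rightarrow> (real \<Rightarrow> real \<Rightarrow> real)
    \<Rightarrow> (real \<Rightarrow> real \<Rightarrow> real) \<Rightarrow> real \<Rightarrow> real \<Rightarrow> real" where
  "pressure f V u1 u2 = (\<lambda>t x. deriv f (u1 t x + u2 t x) + V x)"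

definition flux :: "real \<Rightarrow> (real \<Rightarrow> real) \<Rightarrow> real \<Rightarrow> (real \<Rightarrow> real) \<Rightarrow> (real \<Rightarrow> real \<Rightarrow> real)
    \<Rightarrow> (real \<Rightarrow> real \<Rightarrow> real) \<Rightarrow> (real \<Rightarrow> real \<Rightarrow> real) \<Rightarrow> real \<Rightarrow> real \<Rightarrow> real" where
  "flux L f \<eta> V ui u1 u2 = (\<lambda>t x. \<eta> * Dx L ui t x + ui t x * Dx L (pressure f V u1 u2) t x)"

text \<open>Regularity C([0,T];C^3([0,L])) \<inter> C^1([0,T];C^1([0,L])), expressed through
  joint continuity of the partial derivatives on the compact set [0,T] x [0,L].\<close>
definition classical_reg :: "real \<Rightarrow> real \<Rightarrow> (real \<Rightarrow> real \<Rightarrow> real) \<Rightarrow> bool" where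
  "classical_reg L T u \<longleftrightarrow>
     (\<forall>t\<in>{0..T}. \<forall>k<3. \<forall>x\<in>{0..L}. ((Dx L ^^ k) u t) differentiable (at x within {0..L})) \<and>
     (\<forall>k\<le>3. continuous_on ({0..T} \<times> {0..L}) (\<lambda>(t,x). (Dx L ^^ k) u t x)) \<and>
     (\<forall>t\<in>{0..T}. \<forall>x\<in>{0..L}. (\<lambda>s. u s x) differentiable (at t within {0..T})) \<and>
     (\<forall>t\<in>{0..T}. \<forall>x\<in>{0..L}. (Dt T u t) differentiable (at x within {0..L})) \<and>
     continuous_on ({0..T} \<times> {0..L}) (\<lambda>(t,x). Dt T u t x) \<and>
     continuous_on ({0..T} \<times> {0..L}) (\<lambda>(t,x). Dx L (Dt T u) t x)"

definition component_eq :: "real \<Rightarrow> real \<Rightarrow> (real \<Rightarrow> real) \<Rightarrow> real \<Rightarrow> (real \<Rightarrow> real)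
    \<Rightarrow> (real \<Rightarrow> real \<Rightarrow> real) \<Rightarrow> (real \<Rightarrow> real \<Rightarrow> real) \<Rightarrow> (real \<Rightarrow> real \<Rightarrow> real) \<Rightarrow> bool" where
  "component_eq L T f \<eta> V ui u1 u2 \<longleftrightarrow>
     (\<forall>t\<in>{0<..<T}. \<forall>x\<in>{0..L}. (pressure f V u1 u2 t) differentiable (at x within {0..L})) \<and>
     (\<forall>t\<in>{0<..<T}. \<forall>x\<in>{0<..<L}.
        (flux L f \<eta> V ui u1 u2 t) differentiable (at x within {0..L}) \<and>
        Dt T ui t x = Dx L (flux L f \<eta> V ui u1 u2) t x) \<and>
     (\<forall>t\<in>{0<..<T}. flux L f \<eta> V ui u1 u2 t 0 = 0 \<and> flux L f \<eta> V ui u1 u2 t L = 0)"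

definition classical_solution :: "real \<Rightarrow> real \<Rightarrow> (real \<Rightarrow> real) \<Rightarrow> real
    \<Rightarrow> (real \<Rightarrow> real) \<Rightarrow> (real \<Rightarrow> real) \<Rightarrow> (real \<Rightarrow> real) \<Rightarrow> (real \<Rightarrow> real)
    \<Rightarrow> (real \<Rightarrow> real \<Rightarrow> real) \<Rightarrow> (real \<Rightarrow> real \<Rightarrow> real) \<Rightarrow> bool" where
  "classical_solution L T f \<eta> V1 V2 r10 r20 r1 r2 \<longleftrightarrow>
     classical_reg L T r1 \<and> classical_reg L T r2 \<and>
     (\<forall>t\<in>{0..T}. \<forall>x\<in>{0..L}. r1 t x + r2 t x > 0) \<and>
     (\<forall>x\<in>{0..L}. r1 0 x = r10 x \<and> r2 0 x = r20 x) \<and>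
     component_eq L T f \<eta> V1 r1 r1 r2 \<and> component_eq L T f \<eta> V2 r2 r1 r2"

text \<open>Zeroth- and first-order boundary compatibility conditions for the initial data
  (time-independent lifts a_i(t,x) = rho_{i,0}(x)).  The first-order condition is the
  time-differentiated no-flux condition at t = 0, where d_t rho_i is replaced by
  G_i = d_x(flux_i) from the equation.\<close>
definition compat0 :: "real \<Rightarrow> (real \<Rightarrow> real) \<Rightarrow> real \<Rightarrow> (real \<Rightarrow> real) \<Rightarrow> (real \<Rightarrow> real)
    \<Rightarrow> (real \<Rightarrow> real) \<Rightarrow> (real \<Rightarrow> real) \<Rightarrow> bool" where
  "compat0 L f \<eta> V1 V2 a1 a2 \<longleftrightarrow>
     (let u1 = (\<lambda>t. a1); u2 = (\<lambda>t. a2) in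
       \<forall>x\<in>{0, L}. flux L f \<eta> V1 u1 u1 u2 0 x = 0 \<and> flux L f \<eta> V2 u2 u1 u2 0 x = 0)"

definition compat1 :: "real \<Rightarrow> (real \<Rightarrow> real) \<Rightarrow> real \<Rightarrow> (real \<Rightarrow> real) \<Rightarrow> (real \<Rightarrow> real)
    \<Rightarrow> (real \<Rightarrow> real) \<Rightarrow> (real \<Rightarrow> real) \<Rightarrow> bool" where
  "compat1 L f \<eta> V1 V2 a1 a2 \<longleftrightarrow>
     (let u1 = (\<lambda>t. a1); u2 = (\<lambda>t. a2);
          G1 = Dx L (flux L f \<eta> V1 u1 u1 u2);
          G2 = Dx L (flux L f \<eta> V2 u2 u1 u2);
          Q = (\<lambda>t x. (deriv ^^ 2) f (u1 t x + u2 t x) * (G1 t x + G2 t x)) in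
       \<forall>x\<in>{0, L}.
         \<eta> * Dx L G1 0 x + G1 0 x * Dx L (pressure f V1 u1 u2) 0 x + u1 0 x * Dx L Q 0 x = 0 \<and>
         \<eta> * Dx L G2 0 x + G2 0 x * Dx L (pressure f V2 u1 u2) 0 x + u2 0 x * Dx L Q 0 x = 0)"

end

theory Submission
  imports Defs
begin

text \<open>Summing the two equations, \<open>\<sigma> = \<rho>\<^sub>1 + \<rho>\<^sub>2\<close> satisfies \<open>\<partial>\<^sub>t \<sigma> = \<partial>\<^sub>x J\<close> with the
  no-flux total flux \<open>J = \<eta> \<partial>\<^sub>x\<sigma> + \<sigma> f''(\<sigma>) \<partial>\<^sub>x\<sigma> + \<rho>\<^sub>1 \<partial>\<^sub>xV\<^sub>1 + \<rho>\<^sub>2 \<partial>\<^sub>xV\<^sub>2\<close>, so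
  \<open>d/dt \<integral> \<sigma>\<^bsup>-\<theta>\<^esup> = - \<theta>(\<theta>+1) \<integral> \<sigma>\<^bsup>-\<theta>-2\<^esup> \<partial>\<^sub>x\<sigma> J\<close>. The viscous part of this is
  nonpositive, which is why no constant depends on \<open>\<eta>\<close>. By (I2) the cross-diffusion part
  dominates \<open>|\<partial>\<^sub>x \<sigma>\<^bsup>(\<alpha>-1-\<theta>)/2\<^esup>|\<^sup>2\<close>; since the \<open>\<rho>\<^sub>i\<close> stay nonnegative, the potential part is
  at most \<open>(Lip V\<^sub>1 + Lip V\<^sub>2) \<sigma> |\<partial>\<^sub>x\<sigma>|\<close>, which Young's inequality splits into half of the
  cross-diffusion part and a source \<open>\<le> C (\<sigma>\<^bsup>-\<theta>\<^esup> + 1)\<close>. Gronwall's inequality then bounds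
  \<open>\<integral> \<sigma>\<^bsup>-\<theta>\<^esup>\<close>, and integrating the entropy inequality in time bounds the dissipation.
  Nonnegativity of \<open>\<rho>\<^sub>i\<close> is itself a Gronwall argument for \<open>\<integral> (\<rho>\<^sub>i\<^sup>-)\<^sup>3\<close>.\<close>

lemma lipschitz_on_imp_abs_derivative_le:
  fixes g :: "real \<Rightarrow> real"
  assumes lip: "lipschitz_on l {a..b} g" and ab: "a < b" and x: "x \<in> {a..b}"
    and d: "(g has_real_derivative d) (at x within {a..b})"
  shows "\<bar>d\<bar> \<le> l"
proof -
  have lim: "((\<lambda>y. (g y - g x) / (y - x)) \<longlongrightarrow> d) (at x within {a..b})"
    using d by (simp add: has_field_derivative_iff)
  have nontriv: "\<not> trivial_limit (at x within {a..b})"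
    using ab x by (auto simp: trivial_limit_within)
  have "eventually (\<lambda>y. norm ((g y - g x) / (y - x)) \<le> l) (at x within {a..b})"
    unfolding eventually_at_filter
  proof (intro always_eventually allI impI)
    fix y assume y: "y \<noteq> x" "y \<in> {a..b}"
    have "\<bar>g y - g x\<bar> \<le> l * \<bar>y - x\<bar>"
      using lip y x unfolding lipschitz_on_def dist_real_def by blast
    then show "norm ((g y - g x) / (y - x)) \<le> l"
      using y by (simp add: abs_divide divide_le_eq)
  qed
  then show ?thesis using Lim_norm_ubound[OF nontriv lim] by simp
qed

lemma DERIV_from_left_and_right:
  fixes g :: "real \<Rightarrow> real"
  assumes "(g has_real_derivative d) (at x within {..x})"
    and "(g has_real_derivative d) (at x within {x..})"
  shows "(g has_real_derivative d) (at x)"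
proof -
  have "((\<lambda>y. (g y - g x) / (y - x)) \<longlongrightarrow> d) (at x within ({..x} \<union> {x..}))"
    using assms by (simp add: has_field_derivative_iff Lim_within_Un)
  moreover have "{..x} \<union> {x..} = (UNIV :: real set)" by auto
  ultimately show ?thesis by (simp add: has_field_derivative_iff)
qed

lemma DERIV_glue_zero:
  fixes g h h' :: "real \<Rightarrow> real"
  assumes g_neg: "\<And>r. r \<le> 0 \<Longrightarrow> g r = h r" and g_pos: "\<And>r. 0 \<le> r \<Longrightarrow> g r = 0"
    and h: "\<And>r. (h has_real_derivative h' r) (at r)" and h'0: "h' 0 = 0"
  shows "(g has_real_derivative (if r < 0 then h' r else 0)) (at r)"
proof (cases r "0 :: real" rule: linorder_cases)
  case less
  have "(g has_real_derivative h' r) (at r)"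
    by (rule has_field_derivative_transform_within_open[OF h, of "{..<0}"])
       (use less g_neg in auto)
  then show ?thesis using less by simp
next
  case greater
  have "((\<lambda>_. 0) has_real_derivative 0) (at r)" by simp
  then have "(g has_real_derivative 0) (at r)"
    by (rule has_field_derivative_transform_within_open[of _ _ _ "{0<..}"])
       (use greater g_pos in auto)
  then show ?thesis using greater by simp
next
  case equal
  have "(g has_real_derivative 0) (at 0 within {..0})"
    by (rule has_field_derivative_transform_within[of h _ _ _ 1])
       (use g_neg h[of 0] h'0 in \<open>auto intro: has_field_derivative_at_within\<close>)
  moreover have "(g has_real_derivative 0) (at 0 within {0..})"
    by (rule has_field_derivative_transform_within[of "\<lambda>_. 0" _ _ _ 1])
       (use g_pos in auto)
  ultimately show ?thesis using DERIV_from_left_and_right equal by simp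
qed

text \<open>\<open>negcube r = (r\<^sup>-)\<^sup>3\<close> is the Lyapunov density for the nonnegativity of the
  components; the cube makes it \<open>C\<^sup>2\<close>, as the entropy identity
  \<open>DERIV_integral_no_flux\<close> requires.\<close>

definition negcube :: "real \<Rightarrow> real" where
  "negcube r = - (min r 0 ^ 3)"

definition negcube_d1 :: "real \<Rightarrow> real" where
  "negcube_d1 r = - 3 * min r 0 ^ 2"

definition negcube_d2 :: "real \<Rightarrow> real" where
  "negcube_d2 r = - 6 * min r 0"

lemma negcube_nonneg: "0 \<le> negcube r"
  by (simp add: negcube_def min_def)

lemma negcube_eq_0_iff: "negcube r = 0 \<longleftrightarrow> 0 \<le> r"
  by (auto simp: negcube_def min_def)

lemma DERIV_negcube: "(negcube has_real_derivative negcube_d1 r) (at r)"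
proof -
  have "(negcube has_real_derivative (if r < 0 then - 3 * r ^ 2 else 0)) (at r)"
    by (rule DERIV_glue_zero[where h="\<lambda>r. - (r ^ 3)"])
       (auto simp: negcube_def intro!: derivative_eq_intros)
  then show ?thesis by (cases "r < 0") (auto simp: negcube_d1_def min_def)
qed

lemma DERIV_negcube_d1: "(negcube_d1 has_real_derivative negcube_d2 r) (at r)"
proof -
  have "(negcube_d1 has_real_derivative (if r < 0 then - 6 * r else 0)) (at r)"
    by (rule DERIV_glue_zero[where h="\<lambda>r. - 3 * r ^ 2"])
       (auto simp: negcube_d1_def intro!: derivative_eq_intros)
  then show ?thesis by (cases "r < 0") (auto simp: negcube_d2_def min_def)
qed

lemma continuous_on_negcube: "continuous_on S negcube"
  unfolding negcube_def by (intro continuous_intros)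

lemma continuous_on_negcube_d2: "continuous_on S negcube_d2"
  unfolding negcube_d2_def by (intro continuous_intros)

lemma young_ineq:
  fixes F Y l :: real
  assumes "0 < F"
  shows "l * Y \<le> F * Y\<^sup>2 / 2 + l\<^sup>2 / (2 * F)"
proof -
  have "0 \<le> (F * Y - l)\<^sup>2" by simp
  also have "(F * Y - l)\<^sup>2 = (F * Y\<^sup>2 / 2 + l\<^sup>2 / (2 * F) - l * Y) * (2 * F)"
    using assms by (simp add: power2_eq_square field_simps)
  finally show ?thesis using assms by (simp add: zero_le_mult_iff)
qed

text \<open>On \<open>r < 0\<close> the viscous term \<open>\<eta> y\<close> absorbs the drift \<open>r b\<close> by Young's inequality.\<close>

lemma negcube_flux_le:
  fixes \<eta> r y b B :: real
  assumes \<eta>: "0 < \<eta>" and b: "\<bar>b\<bar> \<le> B"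
  shows "- negcube_d2 r * y * (\<eta> * y + r * b) \<le> 3 * B\<^sup>2 / (2 * \<eta>) * negcube r"
proof (cases "0 \<le> r")
  case True
  then show ?thesis by (simp add: negcube_def negcube_d2_def)
next
  case False
  define q where "q = - r"
  have q: "0 < q" and r: "r = - q" using False by (auto simp: q_def)
  have "y * b \<le> \<bar>y\<bar> * B"
    using mult_left_mono[OF b abs_ge_zero[of y]] abs_ge_self[of "y * b"] by (simp add: abs_mult)
  then have "q * y * b \<le> q * \<bar>y\<bar> * B"
    using q by (simp add: mult.assoc)
  moreover have "q * B * \<bar>y\<bar> \<le> 2 * \<eta> * \<bar>y\<bar>\<^sup>2 / 2 + (q * B)\<^sup>2 / (2 * (2 * \<eta>))"
    using young_ineq[of "2 * \<eta>" "q * B" "\<bar>y\<bar>"] \<eta> by simp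
  ultimately have "- \<eta> * y\<^sup>2 + q * y * b \<le> q\<^sup>2 * B\<^sup>2 / (4 * \<eta>)"
    by (simp add: power_mult_distrib algebra_simps)
  then have "6 * q * (- \<eta> * y\<^sup>2 + q * y * b) \<le> 6 * q * (q\<^sup>2 * B\<^sup>2 / (4 * \<eta>))"
    using q by (intro mult_left_mono) auto
  then show ?thesis
    using False \<eta> by (simp add: r negcube_def negcube_d2_def min_def power2_eq_square
        power3_eq_cube algebra_simps)
qed

lemma gronwall_ineq:
  fixes E E' :: "real \<Rightarrow> real"
  assumes cont: "continuous_on {0..T} E"
    and deriv: "\<And>t. t \<in> {0<..<T} \<Longrightarrow> (E has_real_derivative E' t) (at t)"
    and growth: "\<And>t. t \<in> {0<..<T} \<Longrightarrow> E' t \<le> a * (E t + m)"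
    and t: "t \<in> {0..T}"
  shows "E t + m \<le> (E 0 + m) * exp (a * t)"
proof -
  define G where "G s = (E s + m) * exp (- a * s)" for s
  have "G t \<le> G 0"
  proof (rule DERIV_nonpos_imp_decreasing_open[of 0 t G])
    fix s assume s: "0 < s" "s < t"
    then have sT: "s \<in> {0<..<T}" using t by auto
    have "(G has_real_derivative exp (- a * s) * (E' s - a * (E s + m))) (at s)"
      unfolding G_def using deriv[OF sT]
      by (auto intro!: derivative_eq_intros simp: algebra_simps)
    moreover have "exp (- a * s) * (E' s - a * (E s + m)) \<le> 0"
      using growth[OF sT] by (intro mult_nonneg_nonpos) auto
    ultimately show "\<exists>y. (G has_real_derivative y) (at s) \<and> y \<le> 0" by blast
  next
    show "continuous_on {0..t} G"
      unfolding G_def using t by (intro continuous_intros continuous_on_subset[OF cont]) auto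
  qed (use t in auto)
  then have "(E t + m) * exp (- a * t) * exp (a * t) \<le> (E 0 + m) * exp (a * t)"
    by (intro mult_right_mono) (auto simp: G_def)
  then show ?thesis by (simp add: mult.assoc exp_add[symmetric])
qed

lemma integrated_dissipation_ineq:
  fixes E E' D :: "real \<Rightarrow> real"
  assumes cont: "continuous_on {0..T} E"
    and deriv: "\<And>t. t \<in> {0<..<T} \<Longrightarrow> (E has_real_derivative E' t) (at t)"
    and cont_D: "continuous_on {0..T} D"
    and balance: "\<And>t. t \<in> {0<..<T} \<Longrightarrow> E' t + c * D t \<le> B"
    and T: "0 \<le> T"
  shows "E T + c * integral {0..T} D \<le> E 0 + B * T"
proof -
  define H where "H s = E s + c * integral {0..s} D - B * s" for s
  have "H T \<le> H 0"
  proof (rule DERIV_nonpos_imp_decreasing_open[of 0 T H])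
    fix s assume s: "0 < s" "s < T"
    then have "((\<lambda>s. integral {0..s} D) has_real_derivative D s) (at s)"
      using integral_has_real_derivative[OF cont_D, of s] at_within_Icc_at[of 0 s T] by auto
    then have "(H has_real_derivative E' s + c * D s - B) (at s)"
      unfolding H_def using deriv s by (auto intro!: derivative_eq_intros)
    then show "\<exists>y. (H has_real_derivative y) (at s) \<and> y \<le> 0"
      using balance s by force
  next
    have "continuous_on {0..T} (\<lambda>s. integral {0..s} D)"
      by (rule indefinite_integral_continuous_1) (rule integrable_continuous_real[OF cont_D])
    then show "continuous_on {0..T} H"
      unfolding H_def by (intro continuous_intros cont)
  qed (use T in auto)
  then show ?thesis by (simp add: H_def)
qed

lemma continuous_on_slice:
  fixes w :: "'a::topological_space \<Rightarrow> 'b::topological_space \<Rightarrow> 'c::topological_space"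
  assumes "continuous_on (A \<times> B) (\<lambda>(t, x). w t x)" and "t \<in> A"
  shows "continuous_on B (w t)"
proof -
  have "continuous_on B (\<lambda>x. (\<lambda>(t, x). w t x) (t, x))"
    by (rule continuous_on_compose2[OF assms(1)]) (use assms(2) in \<open>auto intro: continuous_intros\<close>)
  then show ?thesis by simp
qed

lemma DERIV_integral_comp_param:
  fixes u ut :: "real \<Rightarrow> real \<Rightarrow> real" and P P' :: "real \<Rightarrow> real"
  assumes cont_u: "continuous_on ({0..T} \<times> {0..L}) (\<lambda>(t, x). u t x)"
    and cont_ut: "continuous_on ({0..T} \<times> {0..L}) (\<lambda>(t, x). ut t x)"
    and ut: "\<And>t x. t \<in> {0..T} \<Longrightarrow> x \<in> {0..L} \<Longrightarrow>
      ((\<lambda>s. u s x) has_real_derivative ut t x) (at t within {0..T})"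
    and range: "\<And>t x. t \<in> {0..T} \<Longrightarrow> x \<in> {0..L} \<Longrightarrow> u t x \<in> S"
    and P: "\<And>s. s \<in> S \<Longrightarrow> (P has_real_derivative P' s) (at s)"
    and cont_P': "continuous_on S P'"
    and t0: "t0 \<in> {0<..<T}"
  shows "((\<lambda>t. integral {0..L} (\<lambda>x. P (u t x))) has_real_derivative
           integral {0..L} (\<lambda>x. P' (u t0 x) * ut t0 x)) (at t0)"
proof -
  have cont_P: "continuous_on S P"
    using P by (intro continuous_at_imp_continuous_on) (auto intro: DERIV_isCont)
  have "continuous_on ({0..T} \<times> {0..L}) (\<lambda>z. P' ((\<lambda>(t, x). u t x) z))"
    by (rule continuous_on_compose2[OF cont_P' cont_u]) (use range in auto)
  then have cont_integrand: "continuous_on ({0..T} \<times> cbox 0 L) (\<lambda>(t, x). P' (u t x) * ut t x)"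
    using continuous_on_mult[OF _ cont_ut] by (simp add: split_beta)
  have "((\<lambda>t. integral (cbox 0 L) (\<lambda>x. P (u t x))) has_real_derivative
        integral (cbox 0 L) (\<lambda>x. P' (u t0 x) * ut t0 x)) (at t0 within {0..T})"
  proof (rule leibniz_rule_field_derivative[OF _ _ cont_integrand])
    fix t x assume "t \<in> {0..T}" "x \<in> cbox 0 L"
    then show "((\<lambda>t. P (u t x)) has_real_derivative P' (u t x) * ut t x) (at t within {0..T})"
      using DERIV_chain2[OF P ut] range by auto
  next
    fix t assume "t \<in> {0..T}"
    then have "continuous_on {0..L} (\<lambda>x. P (u t x))"
      using range by (intro continuous_on_compose2[OF cont_P continuous_on_slice[OF cont_u]]) auto
    then show "(\<lambda>x. P (u t x)) integrable_on cbox 0 L"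
      by (simp add: integrable_continuous_real)
  qed (use t0 in auto)
  then show ?thesis
    using at_within_Icc_at[of 0 t0 T] t0 by simp
qed

lemma integral_by_parts_no_flux:
  fixes v v' J J' Q Q' :: "real \<Rightarrow> real"
  assumes L: "0 \<le> L"
    and v: "\<And>x. x \<in> {0..L} \<Longrightarrow> (v has_real_derivative v' x) (at x within {0..L})"
    and cont_v': "continuous_on {0..L} v'"
    and range: "\<And>x. x \<in> {0..L} \<Longrightarrow> v x \<in> S"
    and Q: "\<And>s. s \<in> S \<Longrightarrow> (Q has_real_derivative Q' s) (at s)"
    and cont_Q': "continuous_on S Q'"
    and cont_J: "continuous_on {0..L} J" and J_bdry: "J 0 = 0" "J L = 0"
    and J: "\<And>x. x \<in> {0<..<L} \<Longrightarrow> (J has_real_derivative J' x) (at x)"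
    and cont_J': "continuous_on {0..L} J'"
  shows "integral {0..L} (\<lambda>x. Q (v x) * J' x) = - integral {0..L} (\<lambda>x. Q' (v x) * v' x * J x)"
proof -
  have cont_v: "continuous_on {0..L} v"
    using v by (rule DERIV_continuous_on)
  have cont_Q: "continuous_on S Q"
    using Q by (intro continuous_at_imp_continuous_on) (auto intro: DERIV_isCont)
  have cont_Qv: "continuous_on {0..L} (\<lambda>x. Q (v x))"
    by (rule continuous_on_compose2[OF cont_Q cont_v]) (use range in auto)
  have cont_Q'v: "continuous_on {0..L} (\<lambda>x. Q' (v x))"
    by (rule continuous_on_compose2[OF cont_Q' cont_v]) (use range in auto)
  have "((\<lambda>x. Q' (v x) * v' x * J x + Q (v x) * J' x) has_integral
      Q (v L) * J L - Q (v 0) * J 0) {0..L}"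
  proof (rule fundamental_theorem_of_calculus_interior[OF L])
    show "continuous_on {0..L} (\<lambda>x. Q (v x) * J x)"
      by (intro continuous_on_mult cont_Qv cont_J)
    fix x assume x: "x \<in> {0<..<L}"
    then have "(v has_real_derivative v' x) (at x)"
      using v[of x] at_within_Icc_at[of 0 x L] by auto
    then have "((\<lambda>x. Q (v x)) has_real_derivative Q' (v x) * v' x) (at x)"
      using DERIV_chain2[OF Q] range x by auto
    from DERIV_mult[OF this J[OF x]]
    have "((\<lambda>x. Q (v x) * J x) has_real_derivative Q' (v x) * v' x * J x + Q (v x) * J' x) (at x)"
      by (simp add: algebra_simps)
    then show "((\<lambda>x. Q (v x) * J x) has_vector_derivative
        Q' (v x) * v' x * J x + Q (v x) * J' x) (at x)"
      by (simp add: has_real_derivative_iff_has_vector_derivative)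
  qed
  moreover have "(\<lambda>x. Q' (v x) * v' x * J x) integrable_on {0..L}"
    by (intro integrable_continuous_real continuous_on_mult cont_Q'v cont_v' cont_J)
  moreover have "(\<lambda>x. Q (v x) * J' x) integrable_on {0..L}"
    by (intro integrable_continuous_real continuous_on_mult cont_Qv cont_J')
  ultimately have "integral {0..L} (\<lambda>x. Q' (v x) * v' x * J x) + integral {0..L} (\<lambda>x. Q (v x) * J' x) = 0"
    using J_bdry by (simp add: integral_unique flip: integral_add)
  then show ?thesis by linarith
qed

lemma DERIV_integral_no_flux:
  fixes u ut :: "real \<Rightarrow> real \<Rightarrow> real" and P P' P'' ux J :: "real \<Rightarrow> real"
  assumes L: "0 \<le> L"
    and cont_u: "continuous_on ({0..T} \<times> {0..L}) (\<lambda>(t, x). u t x)"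
    and cont_ut: "continuous_on ({0..T} \<times> {0..L}) (\<lambda>(t, x). ut t x)"
    and ut: "\<And>t x. t \<in> {0..T} \<Longrightarrow> x \<in> {0..L} \<Longrightarrow>
      ((\<lambda>s. u s x) has_real_derivative ut t x) (at t within {0..T})"
    and range: "\<And>t x. t \<in> {0..T} \<Longrightarrow> x \<in> {0..L} \<Longrightarrow> u t x \<in> S"
    and P: "\<And>s. s \<in> S \<Longrightarrow> (P has_real_derivative P' s) (at s)"
    and P': "\<And>s. s \<in> S \<Longrightarrow> (P' has_real_derivative P'' s) (at s)"
    and cont_P'': "continuous_on S P''"
    and t0: "t0 \<in> {0<..<T}"
    and ux: "\<And>x. x \<in> {0..L} \<Longrightarrow> (u t0 has_real_derivative ux x) (at x within {0..L})"
    and cont_ux: "continuous_on {0..L} ux"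
    and cont_J: "continuous_on {0..L} J" and J_bdry: "J 0 = 0" "J L = 0"
    and J: "\<And>x. x \<in> {0<..<L} \<Longrightarrow> (J has_real_derivative ut t0 x) (at x)"
  shows "((\<lambda>t. integral {0..L} (\<lambda>x. P (u t x))) has_real_derivative
           integral {0..L} (\<lambda>x. - P'' (u t0 x) * ux x * J x)) (at t0)"
proof -
  have t0': "t0 \<in> {0..T}" using t0 by auto
  have cont_P': "continuous_on S P'"
    using P' by (intro continuous_at_imp_continuous_on) (auto intro: DERIV_isCont)
  have "integral {0..L} (\<lambda>x. P' (u t0 x) * ut t0 x) = - integral {0..L} (\<lambda>x. P'' (u t0 x) * ux x * J x)"
    by (rule integral_by_parts_no_flux[OF L ux cont_ux _ P' cont_P'' cont_J J_bdry J
          continuous_on_slice[OF cont_ut t0']]) (use range t0' in auto)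
  then show ?thesis
    using DERIV_integral_comp_param[OF cont_u cont_ut ut range P cont_P' t0]
    by (simp add: integral_neg)
qed

lemma nonneg_if_integral_negcube_le_0:
  fixes g :: "real \<Rightarrow> real"
  assumes L: "0 < L" and cont: "continuous_on {0..L} g"
    and le: "integral {0..L} (\<lambda>x. negcube (g x)) \<le> 0" and x: "x \<in> {0..L}"
  shows "0 \<le> g x"
proof -
  have cont_neg: "continuous_on {0..L} (\<lambda>x. negcube (g x))"
    by (rule continuous_on_compose2[OF continuous_on_negcube cont]) auto
  have "0 \<le> integral {0..L} (\<lambda>x. negcube (g x))"
    by (intro integral_nonneg integrable_continuous_real cont_neg negcube_nonneg)
  then have "((\<lambda>x. negcube (g x)) has_integral 0) (cbox 0 L)"
    using le integrable_integral[OF integrable_continuous_real[OF cont_neg]] by simp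
  then have "negcube (g x) = 0"
    by (rule has_integral_0_cbox_imp_0[rotated 2]) (use L cont_neg negcube_nonneg x in auto)
  then show ?thesis by (simp add: negcube_eq_0_iff)
qed

lemma powr_le_powr_plus_1:
  fixes s a b :: real
  assumes "0 < s" and "a \<le> 0" and "b \<le> a"
  shows "s powr a \<le> s powr b + 1"
proof (cases "1 \<le> s")
  case True
  then have "s powr a \<le> s powr 0" using assms by (intro powr_mono) auto
  then show ?thesis using assms by (simp add: add_increasing)
next
  case False
  then have "s powr a \<le> s powr b" using assms by (intro powr_mono') auto
  then show ?thesis by simp
qed

lemma I2_imp_deriv2_ge:
  assumes "I2 \<alpha> \<kappa> f" and s: "0 < s" and "0 < \<alpha> * \<kappa>"
  shows "s powr (\<alpha> - 2) / (\<alpha> * \<kappa>) \<le> (deriv ^^ 2) f s"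
proof -
  have "1 / (\<alpha> * \<kappa>) * s powr \<alpha> \<le> s\<^sup>2 * (deriv ^^ 2) f s"
    using assms unfolding I2_def by blast
  then have "1 / (\<alpha> * \<kappa>) * s powr \<alpha> / s\<^sup>2 \<le> (deriv ^^ 2) f s"
    using s by (simp only: pos_divide_le_eq zero_less_power mult.commute)
  moreover have "s powr (\<alpha> - 2) / (\<alpha> * \<kappa>) = 1 / (\<alpha> * \<kappa>) * s powr \<alpha> / s\<^sup>2"
    using s by (simp add: powr_diff powr_realpow)
  ultimately show ?thesis by simp
qed

text \<open>The integrand of the entropy identity for \<open>P(s) = s\<^bsup>-\<theta>\<^esup>\<close> is
  \<open>- k s\<^bsup>-\<theta>-2\<^esup> y J\<close> with \<open>k = \<theta>(\<theta>+1)\<close>, \<open>y = \<partial>\<^sub>x\<sigma>\<close> and total flux \<open>J = \<eta> y + s F y + w\<close>,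
  where \<open>F = f''(\<sigma>)\<close> and \<open>w\<close> is the potential part. Half of the cross-diffusion term
  absorbs \<open>w\<close>.\<close>

lemma entropy_flux_absorb_le:
  fixes s y \<eta> F w l k \<theta> :: real
  assumes s: "0 < s" and \<eta>: "0 \<le> \<eta>" and k: "0 \<le> k" and F: "0 < F" and w: "\<bar>w\<bar> \<le> l * s"
  shows "- (k * s powr (- \<theta> - 2)) * y * (\<eta> * y + s * F * y + w)
    \<le> - k / 2 * (s powr (- \<theta> - 1) * F * y\<^sup>2) + k / 2 * l\<^sup>2 * (s powr (- \<theta> - 1) / F)"
proof -
  define Q where "Q = s powr (- \<theta> - 2)"
  define R where "R = s powr (- \<theta> - 1)"
  have Q: "0 < Q" and R: "0 < R" using s by (simp_all add: Q_def R_def)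
  have QR: "Q * s = R"
  proof -
    have "- \<theta> - 2 + 1 = - \<theta> - 1" by simp
    then have "Q * s powr 1 = R"
      unfolding Q_def R_def by (metis powr_add)
    then show ?thesis using s by simp
  qed
  have "- (y * w) \<le> \<bar>y\<bar> * (l * s)"
    using mult_left_mono[OF w abs_ge_zero[of y]] abs_ge_self[of "- (y * w)"] by (simp add: abs_mult)
  then have "Q * (- (y * w)) \<le> Q * (\<bar>y\<bar> * (l * s))"
    using Q by (intro mult_left_mono) auto
  also have "\<dots> = R * (l * \<bar>y\<bar>)"
    by (simp add: QR[symmetric] algebra_simps)
  also have "\<dots> \<le> R * (F * y\<^sup>2 / 2 + l\<^sup>2 / (2 * F))"
    using young_ineq[OF F, of l "\<bar>y\<bar>"] R by (intro mult_left_mono) auto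
  finally have cross: "Q * (- (y * w)) \<le> R * (F * y\<^sup>2 / 2 + l\<^sup>2 / (2 * F))" .
  have "- (k * Q) * y * (\<eta> * y + s * F * y + w)
      = - k * \<eta> * (Q * y\<^sup>2) - k * (Q * s) * F * y\<^sup>2 + k * (Q * (- (y * w)))"
    by (simp add: algebra_simps power2_eq_square)
  also have "\<dots> \<le> - k * R * F * y\<^sup>2 + k * (R * (F * y\<^sup>2 / 2 + l\<^sup>2 / (2 * F)))"
  proof -
    have "0 \<le> k * \<eta> * (Q * y\<^sup>2)" using k \<eta> Q by simp
    moreover have "k * (Q * (- (y * w))) \<le> k * (R * (F * y\<^sup>2 / 2 + l\<^sup>2 / (2 * F)))"
      using cross k by (rule mult_left_mono)
    ultimately show ?thesis unfolding QR by linarith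
  qed
  also have "\<dots> = - k / 2 * (R * F * y\<^sup>2) + k / 2 * l\<^sup>2 * (R / F)"
    using F by (simp add: field_simps)
  finally show ?thesis unfolding Q_def R_def .
qed

lemma entropy_flux_pointwise_le:
  fixes s y \<eta> F w l k \<alpha> \<kappa> \<theta> :: real
  assumes s: "0 < s" and \<eta>: "0 \<le> \<eta>" and k: "0 \<le> k" and a\<kappa>: "0 < \<alpha> * \<kappa>"
    and F: "s powr (\<alpha> - 2) / (\<alpha> * \<kappa>) \<le> F" and w: "\<bar>w\<bar> \<le> l * s"
  shows "- (k * s powr (- \<theta> - 2)) * y * (\<eta> * y + s * F * y + w)
    \<le> - (k / (2 * \<alpha> * \<kappa>) * s powr (\<alpha> - \<theta> - 3) * y\<^sup>2)
      + k * l\<^sup>2 * \<alpha> * \<kappa> / 2 * s powr (1 - \<alpha> - \<theta>)"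
proof -
  define R where "R = s powr (- \<theta> - 1)"
  have R: "0 < R" using s by (simp add: R_def)
  have F_pos: "0 < F"
    using F s a\<kappa> by (smt (verit) divide_pos_pos powr_gt_zero)
  have "- k / 2 * (R * F * y\<^sup>2) \<le> - k / 2 * (R * (s powr (\<alpha> - 2) / (\<alpha> * \<kappa>)) * y\<^sup>2)"
  proof (rule mult_left_mono_neg)
    show "R * (s powr (\<alpha> - 2) / (\<alpha> * \<kappa>)) * y\<^sup>2 \<le> R * F * y\<^sup>2"
      using F R by (intro mult_right_mono mult_left_mono) auto
  qed (use k in simp)
  moreover have "1 / F \<le> 1 / (s powr (\<alpha> - 2) / (\<alpha> * \<kappa>))"
    using F F_pos s a\<kappa> by (intro divide_left_mono) auto
  then have "R / F \<le> R * (\<alpha> * \<kappa> * s powr (2 - \<alpha>))"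
    using R s by (simp add: powr_diff powr_minus_divide divide_inverse mult_ac)
  then have "k / 2 * l\<^sup>2 * (R / F) \<le> k / 2 * l\<^sup>2 * (R * (\<alpha> * \<kappa> * s powr (2 - \<alpha>)))"
    using k by (intro mult_left_mono) auto
  moreover have "- k / 2 * (R * (s powr (\<alpha> - 2) / (\<alpha> * \<kappa>)) * y\<^sup>2)
      + k / 2 * l\<^sup>2 * (R * (\<alpha> * \<kappa> * s powr (2 - \<alpha>)))
    = - (k / (2 * \<alpha> * \<kappa>) * s powr (\<alpha> - \<theta> - 3) * y\<^sup>2)
      + k * l\<^sup>2 * \<alpha> * \<kappa> / 2 * s powr (1 - \<alpha> - \<theta>)"
    using s a\<kappa> by (simp add: R_def powr_add[symmetric] field_simps)
  ultimately show ?thesis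
    using entropy_flux_absorb_le[OF s \<eta> k F_pos w, of \<theta> y] unfolding R_def by linarith
qed

lemma classical_reg_Dx_power_continuous:
  assumes "classical_reg L T u" and "k \<le> 3"
  shows "continuous_on ({0..T} \<times> {0..L}) (\<lambda>(t, x). (Dx L ^^ k) u t x)"
  using assms unfolding classical_reg_def by blast

lemma classical_reg_continuous:
  "classical_reg L T u \<Longrightarrow> continuous_on ({0..T} \<times> {0..L}) (\<lambda>(t, x). u t x)"
  using classical_reg_Dx_power_continuous[of L T u 0] by simp

lemma classical_reg_Dx_continuous:
  "classical_reg L T u \<Longrightarrow> continuous_on ({0..T} \<times> {0..L}) (\<lambda>(t, x). Dx L u t x)"
  using classical_reg_Dx_power_continuous[of L T u 1] by simp

lemma classical_reg_Dt_continuous: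
  "classical_reg L T u \<Longrightarrow> continuous_on ({0..T} \<times> {0..L}) (\<lambda>(t, x). Dt T u t x)"
  unfolding classical_reg_def by blast

lemma classical_reg_has_Dx:
  assumes "classical_reg L T u" and "t \<in> {0..T}" and "x \<in> {0..L}"
  shows "(u t has_real_derivative Dx L u t x) (at x within {0..L})"
proof -
  have "\<forall>k<3. (Dx L ^^ k) u t differentiable (at x within {0..L})"
    using assms unfolding classical_reg_def by blast
  then have "u t differentiable (at x within {0..L})"
    by (auto dest: spec[of _ 0])
  then show ?thesis
    by (simp add: Dx_def has_real_derivative_iff_has_vector_derivative vector_derivative_works)
qed

lemma classical_reg_has_Dt:
  assumes "classical_reg L T u" and "t \<in> {0..T}" and "x \<in> {0..L}"
  shows "((\<lambda>s. u s x) has_real_derivative Dt T u t x) (at t within {0..T})"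
proof -
  have "(\<lambda>s. u s x) differentiable (at t within {0..T})"
    using assms unfolding classical_reg_def by blast
  then show ?thesis
    by (simp add: Dt_def has_real_derivative_iff_has_vector_derivative vector_derivative_works)
qed

lemma C31_on_has_dX:
  assumes "C31_on L V" and "x \<in> {0..L}"
  shows "(V has_real_derivative dX L V x) (at x within {0..L})"
proof -
  have "\<forall>k<3. (dX L ^^ k) V differentiable (at x within {0..L})"
    using assms unfolding C31_on_def C_on_def by blast
  then have "V differentiable (at x within {0..L})"
    by (auto dest: spec[of _ 0])
  then show ?thesis
    by (simp add: dX_def has_real_derivative_iff_has_vector_derivative vector_derivative_works)
qed

lemma C31_on_dX_continuous:
  assumes "C31_on L V"
  shows "continuous_on {0..L} (dX L V)"
proof -
  have "\<forall>k<3. \<forall>x\<in>{0..L}. (dX L ^^ k) V differentiable (at x within {0..L})"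
    using assms unfolding C31_on_def C_on_def by blast
  then have "\<forall>x\<in>{0..L}. dX L V differentiable (at x within {0..L})"
    by (auto dest: spec[of _ 1])
  then show ?thesis
    by (auto simp: continuous_on_eq_continuous_within intro: differentiable_imp_continuous_within)
qed

lemma C4beta_loc_has_deriv2:
  assumes "C4beta_loc f \<beta>" and "0 < s"
  shows "(deriv f has_real_derivative (deriv ^^ 2) f s) (at s)"
proof -
  have "\<forall>k<4. \<forall>s>0. (deriv ^^ k) f differentiable (at s)"
    using assms unfolding C4beta_loc_def by blast
  then have "deriv f differentiable (at s)"
    using assms(2) by (auto dest: spec[of _ 1])
  then show ?thesis
    by (simp add: DERIV_deriv_iff_real_differentiable numeral_2_eq_2)
qed

lemma C4beta_loc_deriv2_continuous:
  assumes "C4beta_loc f \<beta>"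
  shows "continuous_on {0<..} ((deriv ^^ 2) f)"
proof -
  have "\<forall>k<4. \<forall>s>0. (deriv ^^ k) f differentiable (at s)"
    using assms unfolding C4beta_loc_def by blast
  then have "\<forall>s>0. (deriv ^^ 2) f differentiable (at s)"
    by (auto dest: spec[of _ 2])
  then show ?thesis
    by (intro continuous_at_imp_continuous_on) (auto intro: differentiable_imp_continuous_within)
qed

lemma component_eq_has_flux_derivative:
  assumes "component_eq L T f \<eta> V ui u1 u2" and "t \<in> {0<..<T}" and "x \<in> {0<..<L}"
  shows "(flux L f \<eta> V ui u1 u2 t has_real_derivative Dt T ui t x) (at x)"
proof -
  have "flux L f \<eta> V ui u1 u2 t differentiable (at x within {0..L})"
    and eq: "Dt T ui t x = Dx L (flux L f \<eta> V ui u1 u2) t x"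
    using assms unfolding component_eq_def by auto
  then have "(flux L f \<eta> V ui u1 u2 t has_real_derivative Dt T ui t x) (at x within {0..L})"
    by (simp add: eq Dx_def has_real_derivative_iff_has_vector_derivative vector_derivative_works)
  then show ?thesis using assms(3) at_within_Icc_at[of 0 x L] by simp
qed

lemma component_eq_flux_boundary:
  assumes "component_eq L T f \<eta> V ui u1 u2" and "t \<in> {0<..<T}"
  shows "flux L f \<eta> V ui u1 u2 t 0 = 0" and "flux L f \<eta> V ui u1 u2 t L = 0"
  using assms unfolding component_eq_def by auto

locale classical_pair =
  fixes L T \<eta> :: real and f :: "real \<Rightarrow> real" and r1 r2 :: "real \<Rightarrow> real \<Rightarrow> real"
  assumes L_pos: "0 < L" and eta_pos: "0 < \<eta>"
    and has_deriv2: "\<And>s. 0 < s \<Longrightarrow> (deriv f has_real_derivative (deriv ^^ 2) f s) (at s)"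
    and deriv2_continuous: "continuous_on {0<..} ((deriv ^^ 2) f)"
    and reg1: "classical_reg L T r1" and reg2: "classical_reg L T r2"
    and sum_pos: "\<And>t x. t \<in> {0..T} \<Longrightarrow> x \<in> {0..L} \<Longrightarrow> 0 < r1 t x + r2 t x"
begin

lemma sum_continuous: "continuous_on ({0..T} \<times> {0..L}) (\<lambda>(t, x). r1 t x + r2 t x)"
  using continuous_on_add[OF classical_reg_continuous[OF reg1] classical_reg_continuous[OF reg2]]
  by (simp add: split_beta)

lemma sum_Dx_continuous:
  "continuous_on ({0..T} \<times> {0..L}) (\<lambda>(t, x). Dx L r1 t x + Dx L r2 t x)"
  using continuous_on_add[OF classical_reg_Dx_continuous[OF reg1] classical_reg_Dx_continuous[OF reg2]]
  by (simp add: split_beta)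

lemma sum_Dt_continuous:
  "continuous_on ({0..T} \<times> {0..L}) (\<lambda>(t, x). Dt T r1 t x + Dt T r2 t x)"
  using continuous_on_add[OF classical_reg_Dt_continuous[OF reg1] classical_reg_Dt_continuous[OF reg2]]
  by (simp add: split_beta)

lemma sum_powr_continuous:
  "continuous_on ({0..T} \<times> {0..L}) (\<lambda>(t, x). (r1 t x + r2 t x) powr q)"
proof -
  have "continuous_on ({0..T} \<times> {0..L}) (\<lambda>z. (\<lambda>(t, x). r1 t x + r2 t x) z powr q)"
    by (rule continuous_on_powr[OF sum_continuous continuous_on_const]) (use sum_pos in fastforce)
  then show ?thesis by (simp add: split_beta)
qed

lemma sum_has_Dx:
  assumes "t \<in> {0..T}" and "x \<in> {0..L}"
  shows "((\<lambda>y. r1 t y + r2 t y) has_real_derivative Dx L r1 t x + Dx L r2 t x) (at x within {0..L})"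
  using classical_reg_has_Dx[OF reg1 assms] classical_reg_has_Dx[OF reg2 assms]
  by (rule DERIV_add)

lemma Dx_eqI:
  assumes "(u t has_real_derivative d) (at x within {0..L})" and "x \<in> {0..L}"
  shows "Dx L u t x = d"
  unfolding Dx_def using assms L_pos
  by (intro vector_derivative_within_closed_interval)
     (auto simp: has_real_derivative_iff_has_vector_derivative)

lemma Dx_pressure:
  assumes V: "C31_on L V" and t: "t \<in> {0..T}" and x: "x \<in> {0..L}"
  shows "Dx L (pressure f V r1 r2) t x
    = (deriv ^^ 2) f (r1 t x + r2 t x) * (Dx L r1 t x + Dx L r2 t x) + dX L V x"
proof (rule Dx_eqI[OF _ x])
  have "(deriv f has_real_derivative (deriv ^^ 2) f (r1 t x + r2 t x)) (at (r1 t x + r2 t x))"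
    using has_deriv2 sum_pos[OF t x] by blast
  from DERIV_add[OF DERIV_chain2[OF this sum_has_Dx[OF t x]] C31_on_has_dX[OF V x]]
  show "(pressure f V r1 r2 t has_real_derivative
      (deriv ^^ 2) f (r1 t x + r2 t x) * (Dx L r1 t x + Dx L r2 t x) + dX L V x) (at x within {0..L})"
    by (simp add: pressure_def)
qed

lemma Dx_pressure_continuous:
  assumes V: "C31_on L V"
  shows "continuous_on ({0..T} \<times> {0..L}) (\<lambda>(t, x). Dx L (pressure f V r1 r2) t x)"
proof -
  have "continuous_on ({0..T} \<times> {0..L}) (\<lambda>z. (deriv ^^ 2) f ((\<lambda>(t, x). r1 t x + r2 t x) z))"
    by (rule continuous_on_compose2[OF deriv2_continuous sum_continuous]) (use sum_pos in auto)
  moreover have "continuous_on ({0..T} \<times> {0..L}) (\<lambda>z. dX L V (snd z))"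
    by (rule continuous_on_compose2[OF C31_on_dX_continuous[OF V]]) (auto intro: continuous_intros)
  ultimately have "continuous_on ({0..T} \<times> {0..L}) (\<lambda>(t, x).
      (deriv ^^ 2) f (r1 t x + r2 t x) * (Dx L r1 t x + Dx L r2 t x) + dX L V x)"
    using continuous_on_add[OF continuous_on_mult[OF _ sum_Dx_continuous]]
    by (simp add: split_beta)
  then show ?thesis
    by (rule continuous_on_eq) (auto simp: Dx_pressure[OF V])
qed

lemma flux_continuous:
  assumes V: "C31_on L V" and regi: "classical_reg L T ri"
  shows "continuous_on ({0..T} \<times> {0..L}) (\<lambda>(t, x). flux L f \<eta> V ri r1 r2 t x)"
  unfolding flux_def
  using classical_reg_Dx_continuous[OF regi] classical_reg_continuous[OF regi]
    Dx_pressure_continuous[OF V]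
  by (auto simp: split_beta intro!: continuous_intros)

lemma Dx_sum_powr:
  assumes t: "t \<in> {0..T}" and x: "x \<in> {0..L}"
  shows "Dx L (\<lambda>s y. (r1 s y + r2 s y) powr p) t x
     = p * (r1 t x + r2 t x) powr (p - 1) * (Dx L r1 t x + Dx L r2 t x)"
proof (rule Dx_eqI[OF _ x])
  have "((\<lambda>z. z powr p) has_real_derivative p * (r1 t x + r2 t x) powr (p - 1)) (at (r1 t x + r2 t x))"
    using sum_pos[OF t x] by (intro has_real_derivative_powr) auto
  from DERIV_chain2[OF this sum_has_Dx[OF t x]]
  show "((\<lambda>y. (r1 t y + r2 t y) powr p) has_real_derivative
      p * (r1 t x + r2 t x) powr (p - 1) * (Dx L r1 t x + Dx L r2 t x)) (at x within {0..L})"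
    by simp
qed

lemma DERIV_integral_negcube:
  assumes V: "C31_on L V" and regi: "classical_reg L T ri"
    and eq: "component_eq L T f \<eta> V ri r1 r2" and t: "t \<in> {0<..<T}"
  shows "((\<lambda>t. integral {0..L} (\<lambda>x. negcube (ri t x))) has_real_derivative
      integral {0..L} (\<lambda>x. - negcube_d2 (ri t x) * Dx L ri t x * flux L f \<eta> V ri r1 r2 t x)) (at t)"
proof -
  have t': "t \<in> {0..T}" using t by auto
  show ?thesis
  proof (rule DERIV_integral_no_flux[where S=UNIV and P'=negcube_d1 and ut="Dt T ri"])
    show "continuous_on {0..L} (flux L f \<eta> V ri r1 r2 t)"
      by (rule continuous_on_slice[OF flux_continuous[OF V regi] t'])
    show "continuous_on {0..L} (Dx L ri t)"
      by (rule continuous_on_slice[OF classical_reg_Dx_continuous[OF regi] t'])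
  qed (use L_pos t t' component_eq_has_flux_derivative[OF eq t] component_eq_flux_boundary[OF eq t]
      classical_reg_continuous[OF regi] classical_reg_Dt_continuous[OF regi]
      classical_reg_has_Dt[OF regi] classical_reg_has_Dx[OF regi]
      DERIV_negcube DERIV_negcube_d1 continuous_on_negcube_d2 in auto)
qed

lemma negcube_entropy_growth:
  assumes V: "C31_on L V" and regi: "classical_reg L T ri"
  obtains a where "\<And>s. s \<in> {0<..<T} \<Longrightarrow>
    integral {0..L} (\<lambda>x. - negcube_d2 (ri s x) * Dx L ri s x * flux L f \<eta> V ri r1 r2 s x)
      \<le> a * integral {0..L} (\<lambda>x. negcube (ri s x))"
proof -
  obtain B where B: "\<And>t x. t \<in> {0..T} \<Longrightarrow> x \<in> {0..L} \<Longrightarrow> \<bar>Dx L (pressure f V r1 r2) t x\<bar> \<le> B"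
    using compact_continuous_image[OF Dx_pressure_continuous[OF V] compact_Times[OF compact_Icc compact_Icc]]
    by (fastforce dest!: compact_imp_bounded simp: bounded_real)
  show thesis
  proof (rule that)
    fix s assume s: "s \<in> {0<..<T}"
    then have s': "s \<in> {0..T}" by auto
    have cont_ri: "continuous_on {0..L} (ri s)"
      by (rule continuous_on_slice[OF classical_reg_continuous[OF regi] s'])
    have "integral {0..L} (\<lambda>x. - negcube_d2 (ri s x) * Dx L ri s x * flux L f \<eta> V ri r1 r2 s x)
        \<le> integral {0..L} (\<lambda>x. 3 * B\<^sup>2 / (2 * \<eta>) * negcube (ri s x))"
    proof (rule integral_le)
      show "(\<lambda>x. - negcube_d2 (ri s x) * Dx L ri s x * flux L f \<eta> V ri r1 r2 s x) integrable_on {0..L}"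
        using continuous_on_compose2[OF continuous_on_negcube_d2 cont_ri]
          continuous_on_slice[OF classical_reg_Dx_continuous[OF regi] s']
          continuous_on_slice[OF flux_continuous[OF V regi] s']
        by (intro integrable_continuous_real continuous_intros) auto
      show "(\<lambda>x. 3 * B\<^sup>2 / (2 * \<eta>) * negcube (ri s x)) integrable_on {0..L}"
        using continuous_on_compose2[OF continuous_on_negcube cont_ri]
        by (intro integrable_continuous_real continuous_intros) auto
      fix x assume "x \<in> {0..L}"
      then show "- negcube_d2 (ri s x) * Dx L ri s x * flux L f \<eta> V ri r1 r2 s x
          \<le> 3 * B\<^sup>2 / (2 * \<eta>) * negcube (ri s x)"
        unfolding flux_def by (intro negcube_flux_le eta_pos B s')
    qed
    then show "integral {0..L} (\<lambda>x. - negcube_d2 (ri s x) * Dx L ri s x * flux L f \<eta> V ri r1 r2 s x)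
        \<le> 3 * B\<^sup>2 / (2 * \<eta>) * integral {0..L} (\<lambda>x. negcube (ri s x))"
      by simp
  qed
qed

lemma component_nonneg:
  assumes V: "C31_on L V" and regi: "classical_reg L T ri"
    and eq: "component_eq L T f \<eta> V ri r1 r2" and init: "\<And>x. x \<in> {0..L} \<Longrightarrow> 0 \<le> ri 0 x"
    and t: "t \<in> {0..T}" and x: "x \<in> {0..L}"
  shows "0 \<le> ri t x"
proof -
  define E where "E t = integral {0..L} (\<lambda>x. negcube (ri t x))" for t
  obtain a where growth: "\<And>s. s \<in> {0<..<T} \<Longrightarrow>
      integral {0..L} (\<lambda>x. - negcube_d2 (ri s x) * Dx L ri s x * flux L f \<eta> V ri r1 r2 s x) \<le> a * (E s + 0)"
    using negcube_entropy_growth[OF V regi] by (auto simp: E_def)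
  have cont_E: "continuous_on {0..T} E"
    unfolding E_def
    using integral_continuous_on_param[of "{0..T}" 0 L "\<lambda>t x. negcube (ri t x)"]
      continuous_on_compose2[OF continuous_on_negcube[of UNIV] classical_reg_continuous[OF regi]]
    by (simp add: split_beta)
  have "E t + 0 \<le> (E 0 + 0) * exp (a * t)"
    by (rule gronwall_ineq[OF cont_E _ growth t])
       (use DERIV_integral_negcube[OF V regi eq] in \<open>simp add: E_def\<close>)
  moreover have "E 0 = integral {0..L} (\<lambda>x. 0)"
    unfolding E_def by (rule integral_cong) (simp add: init negcube_eq_0_iff)
  ultimately have "E t \<le> 0" by simp
  then show ?thesis
    using nonneg_if_integral_negcube_le_0[OF L_pos continuous_on_slice[OF classical_reg_continuous[OF regi] t] _ x]
    by (simp add: E_def)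
qed

end

definition entropy_dissipation_coeff :: "real \<Rightarrow> real \<Rightarrow> real \<Rightarrow> real" where
  "entropy_dissipation_coeff \<alpha> \<kappa> \<theta> = \<theta> * (\<theta> + 1) / (2 * \<alpha> * \<kappa> * ((\<alpha> - 1 - \<theta>) / 2)\<^sup>2)"

definition entropy_source_coeff :: "real \<Rightarrow> real \<Rightarrow> real \<Rightarrow> real \<Rightarrow> real" where
  "entropy_source_coeff \<alpha> \<kappa> \<theta> l = \<theta> * (\<theta> + 1) * l\<^sup>2 * \<alpha> * \<kappa> / 2"

definition entropy_sup_bound :: "real \<Rightarrow> real \<Rightarrow> real \<Rightarrow> real \<Rightarrow> real \<Rightarrow> real \<Rightarrow> real \<Rightarrow> real" where
  "entropy_sup_bound \<alpha> \<kappa> \<theta> L T N l = (\<bar>N\<bar> + L) * exp (entropy_source_coeff \<alpha> \<kappa> \<theta> l * T)"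

definition entropy_bound :: "real \<Rightarrow> real \<Rightarrow> real \<Rightarrow> real \<Rightarrow> real \<Rightarrow> real \<Rightarrow> real \<Rightarrow> real" where
  "entropy_bound \<alpha> \<kappa> \<theta> L T N l = entropy_sup_bound \<alpha> \<kappa> \<theta> L T N l
     + sqrt ((\<bar>N\<bar> + entropy_source_coeff \<alpha> \<kappa> \<theta> l * entropy_sup_bound \<alpha> \<kappa> \<theta> L T N l * T)
             / entropy_dissipation_coeff \<alpha> \<kappa> \<theta>)"

lemma entropy_dissipation_coeff_mult:
  fixes s y :: real
  assumes s: "0 < s" and p: "\<alpha> - 1 - \<theta> \<noteq> 0"
  defines "p \<equiv> (\<alpha> - 1 - \<theta>) / 2"
  shows "\<theta> * (\<theta> + 1) / (2 * \<alpha> * \<kappa>) * s powr (\<alpha> - \<theta> - 3) * y\<^sup>2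
    = entropy_dissipation_coeff \<alpha> \<kappa> \<theta> * (p * s powr (p - 1) * y)\<^sup>2"
proof -
  have "(s powr (p - 1))\<^sup>2 = s powr ((p - 1) * 2)"
    by (simp flip: powr_numeral add: powr_powr)
  also have "(p - 1) * 2 = \<alpha> - \<theta> - 3"
    by (simp add: p_def field_simps)
  finally have "(s powr (p - 1))\<^sup>2 = s powr (\<alpha> - \<theta> - 3)" .
  moreover have "p \<noteq> 0" using p by (simp add: p_def)
  ultimately show ?thesis
    by (simp add: entropy_dissipation_coeff_def p_def[symmetric] power_mult_distrib)
qed

lemma entropy_source_coeff_mult_le:
  fixes s :: real
  assumes s: "0 < s" and "0 < \<alpha>" and "\<alpha> \<le> 1" and "0 < \<kappa>" and "1 - \<alpha> < \<theta>"
  shows "\<theta> * (\<theta> + 1) * l\<^sup>2 * \<alpha> * \<kappa> / 2 * s powr (1 - \<alpha> - \<theta>)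
    \<le> entropy_source_coeff \<alpha> \<kappa> \<theta> l * (s powr (- \<theta>) + 1)"
  unfolding entropy_source_coeff_def
  using assms by (intro mult_left_mono powr_le_powr_plus_1) auto

locale entropy_setting = classical_pair +
  fixes V1 V2 :: "real \<Rightarrow> real" and \<alpha> \<kappa> \<theta> l1 l2 :: real
  assumes T_pos: "0 < T"
    and V1: "C31_on L V1" and V2: "C31_on L V2"
    and comp1: "component_eq L T f \<eta> V1 r1 r1 r2" and comp2: "component_eq L T f \<eta> V2 r2 r1 r2"
    and lip1: "lipschitz_on l1 {0..L} V1" and lip2: "lipschitz_on l2 {0..L} V2"
    and init1: "\<And>x. x \<in> {0..L} \<Longrightarrow> 0 \<le> r1 0 x" and init2: "\<And>x. x \<in> {0..L} \<Longrightarrow> 0 \<le> r2 0 x"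
    and alpha_pos: "0 < \<alpha>" and alpha_le_1: "\<alpha> \<le> 1" and kappa_pos: "0 < \<kappa>"
    and theta_gt: "1 - \<alpha> < \<theta>"
    and I2: "I2 \<alpha> \<kappa> f"
begin

abbreviation entropy :: "real \<Rightarrow> real" where
  "entropy t \<equiv> integral {0..L} (\<lambda>x. (r1 t x + r2 t x) powr (- \<theta>))"

abbreviation entropy_rate :: "real \<Rightarrow> real" where
  "entropy_rate t \<equiv> integral {0..L} (\<lambda>x. - (\<theta> * (\<theta> + 1) * (r1 t x + r2 t x) powr (- \<theta> - 2))
     * (Dx L r1 t x + Dx L r2 t x) * (flux L f \<eta> V1 r1 r1 r2 t x + flux L f \<eta> V2 r2 r1 r2 t x))"

abbreviation dissipation :: "real \<Rightarrow> real" where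
  "dissipation t \<equiv> integral {0..L} (\<lambda>x. (Dx L (\<lambda>s y. (r1 s y + r2 s y) powr ((\<alpha> - 1 - \<theta>) / 2)) t x)\<^sup>2)"

lemma theta_pos: "0 < \<theta>"
  using theta_gt alpha_le_1 by simp

lemma r1_nonneg: "t \<in> {0..T} \<Longrightarrow> x \<in> {0..L} \<Longrightarrow> 0 \<le> r1 t x"
  by (rule component_nonneg[OF V1 reg1 comp1 init1])

lemma r2_nonneg: "t \<in> {0..T} \<Longrightarrow> x \<in> {0..L} \<Longrightarrow> 0 \<le> r2 t x"
  by (rule component_nonneg[OF V2 reg2 comp2 init2])

lemma potential_flux_bound:
  assumes t: "t \<in> {0..T}" and x: "x \<in> {0..L}"
  shows "\<bar>r1 t x * dX L V1 x + r2 t x * dX L V2 x\<bar> \<le> (\<bar>l1\<bar> + \<bar>l2\<bar>) * (r1 t x + r2 t x)"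
proof -
  have "\<bar>dX L V1 x\<bar> \<le> \<bar>l1\<bar>" "\<bar>dX L V2 x\<bar> \<le> \<bar>l2\<bar>"
    using lipschitz_on_imp_abs_derivative_le[OF lip1 L_pos x C31_on_has_dX[OF V1 x]]
      lipschitz_on_imp_abs_derivative_le[OF lip2 L_pos x C31_on_has_dX[OF V2 x]] by auto
  then have "\<bar>r1 t x * dX L V1 x\<bar> \<le> r1 t x * \<bar>l1\<bar>" "\<bar>r2 t x * dX L V2 x\<bar> \<le> r2 t x * \<bar>l2\<bar>"
    using r1_nonneg[OF t x] r2_nonneg[OF t x] by (simp_all add: abs_mult mult_left_mono)
  moreover have "r1 t x * \<bar>l1\<bar> + r2 t x * \<bar>l2\<bar> \<le> (\<bar>l1\<bar> + \<bar>l2\<bar>) * (r1 t x + r2 t x)"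
    using r1_nonneg[OF t x] r2_nonneg[OF t x] by (simp add: algebra_simps)
  ultimately show ?thesis by (smt (verit) abs_triangle_ineq)
qed

lemma total_flux:
  assumes t: "t \<in> {0..T}" and x: "x \<in> {0..L}"
  shows "flux L f \<eta> V1 r1 r1 r2 t x + flux L f \<eta> V2 r2 r1 r2 t x
    = \<eta> * (Dx L r1 t x + Dx L r2 t x)
      + (r1 t x + r2 t x) * (deriv ^^ 2) f (r1 t x + r2 t x) * (Dx L r1 t x + Dx L r2 t x)
      + (r1 t x * dX L V1 x + r2 t x * dX L V2 x)"
  by (simp add: flux_def Dx_pressure[OF V1 t x] Dx_pressure[OF V2 t x] algebra_simps)

lemma entropy_integrand_le:
  assumes t: "t \<in> {0..T}" and x: "x \<in> {0..L}"
  shows "- (\<theta> * (\<theta> + 1) * (r1 t x + r2 t x) powr (- \<theta> - 2)) * (Dx L r1 t x + Dx L r2 t x)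
      * (flux L f \<eta> V1 r1 r1 r2 t x + flux L f \<eta> V2 r2 r1 r2 t x)
    \<le> - entropy_dissipation_coeff \<alpha> \<kappa> \<theta>
        * (Dx L (\<lambda>s y. (r1 s y + r2 s y) powr ((\<alpha> - 1 - \<theta>) / 2)) t x)\<^sup>2
      + entropy_source_coeff \<alpha> \<kappa> \<theta> (\<bar>l1\<bar> + \<bar>l2\<bar>) * ((r1 t x + r2 t x) powr (- \<theta>) + 1)"
proof -
  define s where "s = r1 t x + r2 t x"
  define y where "y = Dx L r1 t x + Dx L r2 t x"
  define p where "p = (\<alpha> - 1 - \<theta>) / 2"
  define k where "k = \<theta> * (\<theta> + 1)"
  define l where "l = \<bar>l1\<bar> + \<bar>l2\<bar>"
  have s: "0 < s" using sum_pos[OF t x] by (simp add: s_def)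
  have k: "0 \<le> k" using theta_pos by (simp add: k_def)
  have a\<kappa>: "0 < \<alpha> * \<kappa>" using alpha_pos kappa_pos by simp
  have flux: "flux L f \<eta> V1 r1 r1 r2 t x + flux L f \<eta> V2 r2 r1 r2 t x
      = \<eta> * y + s * (deriv ^^ 2) f s * y + (r1 t x * dX L V1 x + r2 t x * dX L V2 x)"
    unfolding s_def y_def by (rule total_flux[OF t x])
  have Dx_powr: "Dx L (\<lambda>s y. (r1 s y + r2 s y) powr p) t x = p * s powr (p - 1) * y"
    unfolding s_def y_def by (rule Dx_sum_powr[OF t x])
  have "- (k * s powr (- \<theta> - 2)) * y * (\<eta> * y + s * (deriv ^^ 2) f s * y
      + (r1 t x * dX L V1 x + r2 t x * dX L V2 x))
    \<le> - (k / (2 * \<alpha> * \<kappa>) * s powr (\<alpha> - \<theta> - 3) * y\<^sup>2)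
      + k * l\<^sup>2 * \<alpha> * \<kappa> / 2 * s powr (1 - \<alpha> - \<theta>)"
    using entropy_flux_pointwise_le[OF s less_imp_le[OF eta_pos] k a\<kappa> I2_imp_deriv2_ge[OF I2 s a\<kappa>]]
      potential_flux_bound[OF t x] by (simp add: s_def l_def)
  moreover have "k / (2 * \<alpha> * \<kappa>) * s powr (\<alpha> - \<theta> - 3) * y\<^sup>2
      = entropy_dissipation_coeff \<alpha> \<kappa> \<theta> * (p * s powr (p - 1) * y)\<^sup>2"
    unfolding k_def p_def using s theta_gt alpha_le_1 by (intro entropy_dissipation_coeff_mult) auto
  moreover have "k * l\<^sup>2 * \<alpha> * \<kappa> / 2 * s powr (1 - \<alpha> - \<theta>)
      \<le> entropy_source_coeff \<alpha> \<kappa> \<theta> l * (s powr (- \<theta>) + 1)"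
    unfolding k_def by (rule entropy_source_coeff_mult_le[OF s alpha_pos alpha_le_1 kappa_pos theta_gt])
  ultimately show ?thesis
    unfolding flux Dx_powr s_def[symmetric] y_def[symmetric] k_def[symmetric]
      l_def[symmetric] p_def[symmetric]
    by linarith
qed

lemma dissipation_coeff_pos: "0 < entropy_dissipation_coeff \<alpha> \<kappa> \<theta>"
  using theta_pos alpha_pos kappa_pos theta_gt alpha_le_1
  by (simp add: entropy_dissipation_coeff_def)

lemma source_coeff_nonneg: "0 \<le> entropy_source_coeff \<alpha> \<kappa> \<theta> l"
  using theta_pos alpha_pos kappa_pos by (simp add: entropy_source_coeff_def)

lemma DERIV_entropy:
  assumes t: "t \<in> {0<..<T}"
  shows "(entropy has_real_derivative entropy_rate t) (at t)"
proof -
  have t': "t \<in> {0..T}" using t by auto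
  have "((\<lambda>t. integral {0..L} (\<lambda>x. (\<lambda>s. s powr (- \<theta>)) (r1 t x + r2 t x))) has_real_derivative
      integral {0..L} (\<lambda>x. - (\<lambda>s. \<theta> * (\<theta> + 1) * s powr (- \<theta> - 2)) (r1 t x + r2 t x)
        * (Dx L r1 t x + Dx L r2 t x) * (flux L f \<eta> V1 r1 r1 r2 t x + flux L f \<eta> V2 r2 r1 r2 t x))) (at t)"
  proof (rule DERIV_integral_no_flux[where S="{0<..}" and ut="\<lambda>t x. Dt T r1 t x + Dt T r2 t x"
        and P'="\<lambda>s. - \<theta> * s powr (- \<theta> - 1)"])
    fix s :: real assume "s \<in> {0<..}"
    then show "((\<lambda>s. s powr (- \<theta>)) has_real_derivative - \<theta> * s powr (- \<theta> - 1)) (at s)"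
      and "((\<lambda>s. - \<theta> * s powr (- \<theta> - 1)) has_real_derivative \<theta> * (\<theta> + 1) * s powr (- \<theta> - 2)) (at s)"
      by (auto intro!: derivative_eq_intros simp: algebra_simps)
  next
    show "continuous_on {0..L} (\<lambda>x. flux L f \<eta> V1 r1 r1 r2 t x + flux L f \<eta> V2 r2 r1 r2 t x)"
      using continuous_on_slice[OF flux_continuous[OF V1 reg1] t']
        continuous_on_slice[OF flux_continuous[OF V2 reg2] t']
      by (intro continuous_intros)
    show "continuous_on {0..L} (\<lambda>x. Dx L r1 t x + Dx L r2 t x)"
      using continuous_on_slice[OF sum_Dx_continuous t'] by simp
  qed (use L_pos t t' sum_pos sum_continuous sum_Dt_continuous sum_has_Dx
      classical_reg_has_Dt[OF reg1] classical_reg_has_Dt[OF reg2]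
      component_eq_has_flux_derivative[OF comp1 t] component_eq_has_flux_derivative[OF comp2 t]
      component_eq_flux_boundary[OF comp1 t] component_eq_flux_boundary[OF comp2 t]
    in \<open>auto intro!: derivative_eq_intros continuous_intros\<close>)
  then show ?thesis by simp
qed

lemma entropy_continuous: "continuous_on {0..T} entropy"
  using integral_continuous_on_param[of "{0..T}" 0 L "\<lambda>t x. (r1 t x + r2 t x) powr (- \<theta>)"]
    sum_powr_continuous by simp

lemma dissipation_integrand_continuous:
  "continuous_on ({0..T} \<times> {0..L})
     (\<lambda>(t, x). (Dx L (\<lambda>s y. (r1 s y + r2 s y) powr ((\<alpha> - 1 - \<theta>) / 2)) t x)\<^sup>2)"
proof -
  define p where "p = (\<alpha> - 1 - \<theta>) / 2"
  have "continuous_on ({0..T} \<times> {0..L})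
      (\<lambda>z. (p * (\<lambda>(t, x). (r1 t x + r2 t x) powr (p - 1)) z * (\<lambda>(t, x). Dx L r1 t x + Dx L r2 t x) z)\<^sup>2)"
    by (intro continuous_intros sum_powr_continuous sum_Dx_continuous)
  then show ?thesis
    unfolding p_def[symmetric]
    by (rule continuous_on_eq) (auto simp: Dx_sum_powr)
qed

lemma dissipation_continuous: "continuous_on {0..T} dissipation"
  using integral_continuous_on_param[of "{0..T}" 0 L
      "\<lambda>t x. (Dx L (\<lambda>s y. (r1 s y + r2 s y) powr ((\<alpha> - 1 - \<theta>) / 2)) t x)\<^sup>2"]
    dissipation_integrand_continuous by simp

lemma dissipation_nonneg: "t \<in> {0..T} \<Longrightarrow> 0 \<le> dissipation t"
  using continuous_on_slice[OF dissipation_integrand_continuous]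
  by (intro integral_nonneg integrable_continuous_real) auto

lemma entropy_nonneg: "t \<in> {0..T} \<Longrightarrow> 0 \<le> entropy t"
  using continuous_on_slice[OF sum_powr_continuous]
  by (intro integral_nonneg integrable_continuous_real) auto

lemma entropy_rate_le:
  assumes t: "t \<in> {0<..<T}"
  shows "entropy_rate t \<le> - entropy_dissipation_coeff \<alpha> \<kappa> \<theta> * dissipation t
    + entropy_source_coeff \<alpha> \<kappa> \<theta> (\<bar>l1\<bar> + \<bar>l2\<bar>) * (entropy t + L)"
proof -
  define c where "c = entropy_dissipation_coeff \<alpha> \<kappa> \<theta>"
  define A where "A = entropy_source_coeff \<alpha> \<kappa> \<theta> (\<bar>l1\<bar> + \<bar>l2\<bar>)"
  have t': "t \<in> {0..T}" using t by auto
  have int_D: "(\<lambda>x. (Dx L (\<lambda>s y. (r1 s y + r2 s y) powr ((\<alpha> - 1 - \<theta>) / 2)) t x)\<^sup>2) integrable_on {0..L}"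
    using continuous_on_slice[OF dissipation_integrand_continuous t'] by (intro integrable_continuous_real)
  have int_E: "(\<lambda>x. (r1 t x + r2 t x) powr (- \<theta>)) integrable_on {0..L}"
    using continuous_on_slice[OF sum_powr_continuous t'] by (intro integrable_continuous_real)
  have int_D': "(\<lambda>x. - c * (Dx L (\<lambda>s y. (r1 s y + r2 s y) powr ((\<alpha> - 1 - \<theta>) / 2)) t x)\<^sup>2)
      integrable_on {0..L}"
    using integrable_on_cmult_left[OF int_D, of "- c"] by simp
  have int_E': "(\<lambda>x. A * ((r1 t x + r2 t x) powr (- \<theta>) + 1)) integrable_on {0..L}"
    using integrable_on_cmult_left[OF integrable_add[OF int_E integrable_const_ivl[of 1 0 L]], of A]
    by simp
  have "entropy_rate t \<le> integral {0..L} (\<lambda>x. - c * (Dx L (\<lambda>s y. (r1 s y + r2 s y) powr ((\<alpha> - 1 - \<theta>) / 2)) t x)\<^sup>2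
      + A * ((r1 t x + r2 t x) powr (- \<theta>) + 1))"
  proof (rule integral_le)
    show "(\<lambda>x. - (\<theta> * (\<theta> + 1) * (r1 t x + r2 t x) powr (- \<theta> - 2)) * (Dx L r1 t x + Dx L r2 t x)
        * (flux L f \<eta> V1 r1 r1 r2 t x + flux L f \<eta> V2 r2 r1 r2 t x)) integrable_on {0..L}"
      using continuous_on_slice[OF sum_powr_continuous t'] continuous_on_slice[OF sum_Dx_continuous t']
        continuous_on_add[OF continuous_on_slice[OF flux_continuous[OF V1 reg1] t']
          continuous_on_slice[OF flux_continuous[OF V2 reg2] t']]
      by (intro integrable_continuous_real continuous_on_mult continuous_on_minus continuous_on_const)
        auto
    show "(\<lambda>x. - c * (Dx L (\<lambda>s y. (r1 s y + r2 s y) powr ((\<alpha> - 1 - \<theta>) / 2)) t x)\<^sup>2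
        + A * ((r1 t x + r2 t x) powr (- \<theta>) + 1)) integrable_on {0..L}"
      using integrable_add[OF int_D' int_E'] by simp
  qed (use entropy_integrand_le[OF t'] in \<open>simp add: c_def A_def\<close>)
  also have "\<dots> = integral {0..L} (\<lambda>x. - c * (Dx L (\<lambda>s y. (r1 s y + r2 s y) powr ((\<alpha> - 1 - \<theta>) / 2)) t x)\<^sup>2)
      + integral {0..L} (\<lambda>x. A * ((r1 t x + r2 t x) powr (- \<theta>) + 1))"
    by (rule integral_add[OF int_D' int_E'])
  also have "\<dots> = - c * dissipation t + A * (entropy t + L)"
    using L_pos integral_add[OF int_E integrable_const_ivl[of 1 0 L]] by simp
  finally show ?thesis by (simp add: c_def A_def)
qed

lemma entropy_le_sup_bound:
  assumes t: "t \<in> {0..T}"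
  shows "entropy t + L \<le> entropy_sup_bound \<alpha> \<kappa> \<theta> L T (entropy 0) (\<bar>l1\<bar> + \<bar>l2\<bar>)"
proof -
  define A where "A = entropy_source_coeff \<alpha> \<kappa> \<theta> (\<bar>l1\<bar> + \<bar>l2\<bar>)"
  have A: "0 \<le> A" by (simp add: A_def source_coeff_nonneg)
  have "entropy t + L \<le> (entropy 0 + L) * exp (A * t)"
  proof (rule gronwall_ineq[OF entropy_continuous DERIV_entropy _ t])
    fix s assume s: "s \<in> {0<..<T}"
    have "0 \<le> entropy_dissipation_coeff \<alpha> \<kappa> \<theta> * dissipation s"
      using dissipation_coeff_pos dissipation_nonneg[of s] s by simp
    then show "entropy_rate s \<le> A * (entropy s + L)"
      using entropy_rate_le[OF s] by (simp add: A_def)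
  qed
  also have "\<dots> \<le> (entropy 0 + L) * exp (A * T)"
  proof (rule mult_left_mono)
    show "exp (A * t) \<le> exp (A * T)"
      using t A by (simp add: mult_left_mono)
    show "0 \<le> entropy 0 + L"
      using entropy_nonneg[of 0] T_pos L_pos by simp
  qed
  finally show ?thesis
    using entropy_nonneg[of 0] T_pos by (simp add: entropy_sup_bound_def A_def)
qed

lemma dissipation_integral_le:
  "integral {0..T} dissipation
    \<le> (\<bar>entropy 0\<bar> + entropy_source_coeff \<alpha> \<kappa> \<theta> (\<bar>l1\<bar> + \<bar>l2\<bar>)
        * entropy_sup_bound \<alpha> \<kappa> \<theta> L T (entropy 0) (\<bar>l1\<bar> + \<bar>l2\<bar>) * T)
      / entropy_dissipation_coeff \<alpha> \<kappa> \<theta>"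
proof -
  define c where "c = entropy_dissipation_coeff \<alpha> \<kappa> \<theta>"
  define A where "A = entropy_source_coeff \<alpha> \<kappa> \<theta> (\<bar>l1\<bar> + \<bar>l2\<bar>)"
  define M where "M = entropy_sup_bound \<alpha> \<kappa> \<theta> L T (entropy 0) (\<bar>l1\<bar> + \<bar>l2\<bar>)"
  have c: "0 < c" by (simp add: c_def dissipation_coeff_pos)
  have "entropy T + c * integral {0..T} dissipation \<le> entropy 0 + A * M * T"
  proof (rule integrated_dissipation_ineq[OF entropy_continuous DERIV_entropy dissipation_continuous])
    fix t assume t: "t \<in> {0<..<T}"
    have "entropy_rate t + c * dissipation t \<le> A * (entropy t + L)"
      using entropy_rate_le[OF t] by (simp add: c_def A_def)
    also have "\<dots> \<le> A * M"
      using entropy_le_sup_bound[of t] t source_coeff_nonneg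
      by (intro mult_left_mono) (simp_all add: A_def M_def)
    finally show "entropy_rate t + c * dissipation t \<le> A * M" .
  qed (use T_pos in auto)
  then have "c * integral {0..T} dissipation \<le> \<bar>entropy 0\<bar> + A * M * T"
    using entropy_nonneg[of T] T_pos by auto
  then show ?thesis
    using c by (simp add: c_def A_def M_def pos_le_divide_eq mult.commute)
qed

theorem entropy_estimate:
  "(SUP t\<in>{0..T}. entropy t) + sqrt (integral {0..T} dissipation)
    \<le> entropy_bound \<alpha> \<kappa> \<theta> L T (entropy 0) (\<bar>l1\<bar> + \<bar>l2\<bar>)"
proof -
  have "(SUP t\<in>{0..T}. entropy t) \<le> entropy_sup_bound \<alpha> \<kappa> \<theta> L T (entropy 0) (\<bar>l1\<bar> + \<bar>l2\<bar>)"
    using entropy_le_sup_bound L_pos T_pos by (intro cSUP_least) force+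
  moreover have "sqrt (integral {0..T} dissipation)
      \<le> sqrt ((\<bar>entropy 0\<bar> + entropy_source_coeff \<alpha> \<kappa> \<theta> (\<bar>l1\<bar> + \<bar>l2\<bar>)
        * entropy_sup_bound \<alpha> \<kappa> \<theta> L T (entropy 0) (\<bar>l1\<bar> + \<bar>l2\<bar>) * T)
        / entropy_dissipation_coeff \<alpha> \<kappa> \<theta>)"
    using dissipation_integral_le by (rule real_sqrt_le_mono)
  ultimately show ?thesis
    unfolding entropy_bound_def by (rule add_mono)
qed

end

lemma f_hyp_imp_I2:
  assumes "f_hyp L \<alpha> \<kappa> f"
  shows "0 < \<alpha>" and "\<alpha> \<le> 1" and "0 < \<kappa>" and "I2 \<alpha> \<kappa> f"
proof -
  have "((H1 \<alpha> f \<or> H2 f \<and> \<alpha> = 1) \<and> 0 < \<kappa> \<and> I2 \<alpha> \<kappa> f \<and> I3 \<kappa> f) \<or> Hyp2 L \<alpha> \<kappa> f"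
    using assms unfolding f_hyp_def .
  then have "0 < \<alpha> \<and> \<alpha> \<le> 1 \<and> 0 < \<kappa> \<and> I2 \<alpha> \<kappa> f"
    unfolding H1_def Hyp2_def by (elim disjE conjE) auto
  then show "0 < \<alpha>" and "\<alpha> \<le> 1" and "0 < \<kappa>" and "I2 \<alpha> \<kappa> f" by auto
qed

lemma classical_solution_entropy_estimate:
  assumes L: "0 < L" and T: "0 < T" and \<theta>: "1 - \<alpha> < \<theta>"
    and f: "f_hyp L \<alpha> \<kappa> f" and f_reg: "C4beta_loc f \<beta>" and \<eta>: "0 < \<eta>"
    and V1: "C31_on L V1" and V2: "C31_on L V2"
    and lip1: "lipschitz_on l1 {0..L} V1" and lip2: "lipschitz_on l2 {0..L} V2"
    and r10: "prob_density L r10" and r20: "prob_density L r20"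
    and N: "integral {0..L} (\<lambda>x. (r10 x + r20 x) powr (- \<theta>)) = N"
    and sol: "classical_solution L T f \<eta> V1 V2 r10 r20 r1 r2"
  shows "(SUP t\<in>{0..T}. integral {0..L} (\<lambda>x. (r1 t x + r2 t x) powr (- \<theta>)))
    + sqrt (integral {0..T} (\<lambda>t. integral {0..L} (\<lambda>x.
        (Dx L (\<lambda>s y. (r1 s y + r2 s y) powr ((\<alpha> - 1 - \<theta>) / 2)) t x)\<^sup>2)))
    \<le> entropy_bound \<alpha> \<kappa> \<theta> L T N (\<bar>l1\<bar> + \<bar>l2\<bar>)"
proof -
  have reg: "classical_reg L T r1" "classical_reg L T r2"
    and pos: "\<forall>t\<in>{0..T}. \<forall>x\<in>{0..L}. r1 t x + r2 t x > 0"
    and init: "\<forall>x\<in>{0..L}. r1 0 x = r10 x \<and> r2 0 x = r20 x"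
    and eq: "component_eq L T f \<eta> V1 r1 r1 r2" "component_eq L T f \<eta> V2 r2 r1 r2"
    using sol unfolding classical_solution_def by blast+
  interpret entropy_setting L T \<eta> f r1 r2 V1 V2 \<alpha> \<kappa> \<theta> l1 l2
  proof unfold_locales
    show "0 \<le> r1 0 x" "0 \<le> r2 0 x" if "x \<in> {0..L}" for x
      using r10 r20 init that by (auto simp: prob_density_def)
  qed (use L T \<theta> \<eta> V1 V2 lip1 lip2 reg pos eq f_hyp_imp_I2[OF f] C4beta_loc_has_deriv2[OF f_reg]
      C4beta_loc_deriv2_continuous[OF f_reg] in auto)
  have "entropy 0 = N"
    unfolding N[symmetric] by (rule integral_cong) (use init in auto)
  then show ?thesis using entropy_estimate by simp
qed

theorem theorem4p2:
  fixes \<alpha> \<kappa> \<theta> L T N l1 l2 :: real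
  assumes "0 < L" and "0 < T" and "1 - \<alpha> < \<theta>"
  shows "\<exists>K>0. \<forall>f \<eta> V1 V2 r10 r20 r1 r2.
    f_hyp L \<alpha> \<kappa> f \<and>
    (\<exists>\<beta>. 0 < \<beta> \<and> \<beta> \<le> 1 \<and> C4beta_loc f \<beta>) \<and> (\<forall>s>0. (deriv ^^ 2) f s \<ge> 0) \<and>
    0 < \<eta> \<and> \<eta> \<le> 1 \<and>
    C31_on L V1 \<and> C31_on L V2 \<and>
    dX L V1 0 = 0 \<and> dX L V1 L = 0 \<and> dX L V2 0 = 0 \<and> dX L V2 L = 0 \<and>
    lipschitz_on l1 {0..L} V1 \<and> lipschitz_on l2 {0..L} V2 \<and>
    C31_on L r10 \<and> C31_on L r20 \<and> prob_density L r10 \<and> prob_density L r20 \<and>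
    (\<forall>x\<in>{0..L}. r10 x + r20 x > 0) \<and>
    compat0 L f \<eta> V1 V2 r10 r20 \<and> compat1 L f \<eta> V1 V2 r10 r20 \<and>
    (\<lambda>x. (r10 x + r20 x) powr (-\<theta>)) integrable_on {0..L} \<and>
    integral {0..L} (\<lambda>x. (r10 x + r20 x) powr (-\<theta>)) = N \<and>
    classical_solution L T f \<eta> V1 V2 r10 r20 r1 r2
    \<longrightarrow>
    (SUP t\<in>{0..T}. integral {0..L} (\<lambda>x. (r1 t x + r2 t x) powr (-\<theta>)))
    + sqrt (integral {0..T} (\<lambda>t. integral {0..L} (\<lambda>x.
        (Dx L (\<lambda>s y. (r1 s y + r2 s y) powr ((\<alpha> - 1 - \<theta>) / 2)) t x)\<^sup>2)))
    < K"
proof -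
  define K where "K = \<bar>entropy_bound \<alpha> \<kappa> \<theta> L T N (\<bar>l1\<bar> + \<bar>l2\<bar>)\<bar> + 1"
  have bound: "entropy_bound \<alpha> \<kappa> \<theta> L T N (\<bar>l1\<bar> + \<bar>l2\<bar>) < K"
    by (simp add: K_def)
  text \<open>The hypotheses \<open>\<eta> \<le> 1\<close>, \<open>f'' \<ge> 0\<close>, \<open>\<partial>\<^sub>xV\<^sub>i = 0\<close> on the boundary, the
    compatibility conditions and the regularity of the initial data serve the existence theory
    only; the estimate does not use them.\<close>
  show ?thesis
  proof (intro exI[of _ K] conjI allI impI)
    show "0 < K" by (simp add: K_def)
  qed (elim conjE exE, rule order.strict_trans1[OF classical_solution_entropy_estimate[OF assms] bound],
      assumption+)
qed

end
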